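(* Let $S\subseteq[n]$ and let $\alpha=\mathbb I(S)\in\{0,1\}^n$ be the indicator vector of $S$ (its $j$-th entry is $1$ if $j\in S$ and $0$ otherwise). Then for every positive integer $t$, $$t\,\mathcal P(\mathrm{SM}_n(S))=\mathrm{Newton}(\kappa_{t\alpha}).$$
   Context: For $S,T\subseteq[n]$, write $T\le S$ if $|T|=|S|$ and, for each $1\le i\le |T|$, the $i$-th smallest element of $T$ is at most the $i$-th smallest element of $S$. The Schubert matroid $\mathrm{SM}_n(S)$ is the matroid on $[n]$ whose bases are $\{T\subseteq[n]: T\le S\}$. For a matroid $M$ on $[n]$ with set of bases $\mathcal B$, $\mathcal P(M)=\mathrm{conv}\{e_B: B\in\mathcal B\}\subset\mathbb R^n$ with $e_B=\sum_{b\in B}e_b$; $t\mathcal P=\{t x: x\in\mathcal P\}$. Key polynomials $\kappa_\alpha(x)\in\mathbb Z[x_1,\dots,x_n]$ for $\alpha\in\mathbb Z_{\ge0}^n$ are defined recursively: if $\alpha_1\ge\alpha_2\ge\dots\ge\alpha_n$ then $\kappa_\alpha=x_1^{\alpha_1}\cdots x_n^{\alpha_n}$; otherwise pick $i$ with $\alpha_i<\alpha_{i+1}$, let $\alpha'$ be $\alpha$ with entries $i,i+1$ swapped, and set $\kappa_\alpha=\partial_i(x_i\kappa_{\alpha'})$, where $\partial_i f=(f-s_if)/(x_i-x_{i+1})$ and $s_if$ swaps $x_i$ and $x_{i+1}$ (this is independent of the choice of $i$). For a polynomial $f=\sum_\beta c_\beta x^\beta$, $\mathrm{Newton}(f)=\mathrm{conv}\{\beta: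 c_\beta\neq0\}$. *)

theory Defs
  imports "HOL-Analysis.Analysis" "HOL-Library.Poly_Mapping" "HOL-Analysis.Finite_Function_Topology"
begin

text \<open>Points of R^n are finitely
  supported maps nat =>0 real (coordinates indexed by 1..n).\<close>

type_synonym mpoly = "(nat \<Rightarrow>\<^sub>0 nat) \<Rightarrow>\<^sub>0 int"

definition var :: "nat \<Rightarrow> mpoly" where
  "var i = Poly_Mapping.single (Poly_Mapping.single i 1) 1"

definition monom :: "(nat \<Rightarrow>\<^sub>0 nat) \<Rightarrow> mpoly" where
  "monom \<beta> = Poly_Mapping.single \<beta> 1"

definition swp :: "nat \<Rightarrow> nat \<Rightarrow> nat" where
  "swp i j = (if j = i then Suc i else if j = Suc i then i else j)"

definition swap_exp :: "nat \<Rightarrow> (nat \<Rightarrow>\<^sub>0 nat) \<Rightarrow> (nat \<Rightarrow>\<^sub>0 nat)" where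
  "swap_exp i \<beta> = Poly_Mapping.map_key (swp i) \<beta>"

definition swap_poly :: "nat \<Rightarrow> mpoly \<Rightarrow> mpoly" where
  "swap_poly i f = Poly_Mapping.map_key (swap_exp i) f"

definition ddiff :: "nat \<Rightarrow> mpoly \<Rightarrow> mpoly" where
  "ddiff i f = (THE g. (var i - var (Suc i)) * g = f - swap_poly i f)"

text \<open>Recursive characterisation of key polynomials for alpha in Z_{>=0}^n
  (alpha supported on {1..n}); any admissible choice of i is allowed.\<close>
inductive is_key :: "nat \<Rightarrow> (nat \<Rightarrow>\<^sub>0 nat) \<Rightarrow> mpoly \<Rightarrow> bool" for n where
  dominant: "Poly_Mapping.keys \<alpha> \<subseteq> {1..n} \<Longrightarrow>
     (\<forall>i. 1 \<le> i \<and> i < n \<longrightarrow> Poly_Mapping.lookup \<alpha> (Suc i) \<le> Poly_Mapping.lookup \<alpha> i) \<Longrightarrow>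
     is_key n \<alpha> (monom \<alpha>)"
| step: "Poly_Mapping.keys \<alpha> \<subseteq> {1..n} \<Longrightarrow> 1 \<le> i \<Longrightarrow> i < n \<Longrightarrow>
     Poly_Mapping.lookup \<alpha> i < Poly_Mapping.lookup \<alpha> (Suc i) \<Longrightarrow>
     is_key n (swap_exp i \<alpha>) g \<Longrightarrow>
     is_key n \<alpha> (ddiff i (var i * g))"

definition key_poly :: "nat \<Rightarrow> (nat \<Rightarrow>\<^sub>0 nat) \<Rightarrow> mpoly" where
  "key_poly n \<alpha> = (THE f. is_key n \<alpha> f)"

definition newton :: "mpoly \<Rightarrow> (nat \<Rightarrow>\<^sub>0 real) set" where
  "newton f = convex hull ((\<lambda>\<beta>. Poly_Mapping.map real \<beta>) ` Poly_Mapping.keys f)"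

definition gale_le :: "nat set \<Rightarrow> nat set \<Rightarrow> bool" where
  "gale_le T S \<longleftrightarrow> card T = card S \<and>
     (\<forall>i < card T. sorted_list_of_set T ! i \<le> sorted_list_of_set S ! i)"

definition schubert_bases :: "nat \<Rightarrow> nat set \<Rightarrow> nat set set" where
  "schubert_bases n S = {T. T \<subseteq> {1..n} \<and> gale_le T S}"

definition e_vec :: "nat set \<Rightarrow> (nat \<Rightarrow>\<^sub>0 real)" where
  "e_vec B = (\<Sum>b\<in>B. Poly_Mapping.single b 1)"

definition matroid_polytope :: "nat set set \<Rightarrow> (nat \<Rightarrow>\<^sub>0 real) set" where
  "matroid_polytope \<B> = convex hull (e_vec ` \<B>)"

definition indicator_exp :: "nat set \<Rightarrow> (nat \<Rightarrow>\<^sub>0 nat)" where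
  "indicator_exp S = (\<Sum>j\<in>S. Poly_Mapping.single j 1)"

end

theory Submission
  imports Defs
begin

text \<open>Let \<open>\<pi>\<^sub>i f = \<partial>\<^sub>i (x\<^sub>i f)\<close>. An ascent of \<open>t \<bbbI>(S)\<close> is an \<open>i\<close> with \<open>i \<notin> S \<ni> i + 1\<close>, and there
  \<open>\<kappa>\<^bsub>t\<bbbI>(S)\<^esub> = \<pi>\<^sub>i \<kappa>\<^bsub>t\<bbbI>(s\<^sub>i S)\<^esub>\<close>; the recursion ends at \<open>S = {1..m}\<close>, whose only basis is \<open>S\<close>.
  The monomials of \<open>\<pi>\<^sub>i x\<^sup>\<gamma>\<close> lie on the segment from \<open>\<gamma>\<close> to \<open>s\<^sub>i \<gamma>\<close>, and \<open>t \<P>(SM\<^sub>n(S))\<close> is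
  convex, stable under \<open>s\<^sub>i\<close> and contains \<open>t \<P>(SM\<^sub>n(s\<^sub>i S))\<close>, so by induction all exponents
  lie in the polytope. Conversely, at a vertex \<open>t e\<^sub>T\<close> the coefficient of \<open>\<pi>\<^sub>i g\<close> is the single
  coefficient of \<open>g\<close> at \<open>t e\<^sub>T\<close> or at \<open>t e\<^bsub>s\<^sub>i T\<^esub>\<close>, and one of these two sets is a basis of
  \<open>SM\<^sub>n(s\<^sub>i S)\<close>; so every vertex is an exponent.\<close>

section \<open>Swapping adjacent variables\<close>

lemma lookup_map_poly_mapping:
  "Poly_Mapping.lookup (Poly_Mapping.map g p) k = (g (Poly_Mapping.lookup p k) when Poly_Mapping.lookup p k \<noteq> 0)"
  by transfer simp

lemma lookup_map_key_inj:
  assumes [transfer_rule]: "inj f"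
  shows "Poly_Mapping.lookup (Poly_Mapping.map_key f p) k = Poly_Mapping.lookup p (f k)"
  by transfer simp

lemma lookup_scaleR_poly_mapping:
  "Poly_Mapping.lookup (c *\<^sub>R x) k = c *\<^sub>R Poly_Mapping.lookup x k"
  by (simp add: scaleR_poly_mapping_def lookup_Abs_poly_mapping)

lemma poly_mapping_sum_singles:
  "(\<Sum>x\<in>Poly_Mapping.keys p. Poly_Mapping.single x (Poly_Mapping.lookup p x)) = p"
proof (rule poly_mapping_eqI)
  fix k
  show "Poly_Mapping.lookup (\<Sum>x\<in>Poly_Mapping.keys p. Poly_Mapping.single x (Poly_Mapping.lookup p x)) k =
    Poly_Mapping.lookup p k"
    by (cases "k \<in> Poly_Mapping.keys p") (simp_all add: lookup_sum lookup_single when_def in_keys_iff)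
qed

lemma swp_swp [simp]: "swp i (swp i j) = j"
  by (simp add: swp_def)

lemma inj_swp: "inj (swp i)"
  by (metis injI swp_swp)

lemma swp_commute:
  assumes "i \<noteq> j" "Suc i \<noteq> j" "i \<noteq> Suc j"
  shows "swp i (swp j k) = swp j (swp i k)"
  using assms by (auto simp: swp_def)

lemma mem_swp_image: "j \<in> swp i ` T \<longleftrightarrow> swp i j \<in> T"
  by (metis image_iff swp_swp)

lemma card_swp_image: "card (swp i ` T) = card T"
  by (rule card_image[OF inj_on_subset[OF inj_swp subset_UNIV]])

lemma swp_image_subset: "T \<subseteq> {1..n} \<Longrightarrow> 1 \<le> i \<Longrightarrow> i < n \<Longrightarrow> swp i ` T \<subseteq> {1..n}"
  by (auto simp: swp_def)

lemma lookup_swap_exp: "Poly_Mapping.lookup (swap_exp i \<beta>) j = Poly_Mapping.lookup \<beta> (swp i j)"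
  unfolding swap_exp_def by (simp add: lookup_map_key_inj inj_swp)

lemma swap_exp_swap_exp [simp]: "swap_exp i (swap_exp i \<beta>) = \<beta>"
  by (simp add: poly_mapping_eq_iff fun_eq_iff lookup_swap_exp)

lemma inj_swap_exp: "inj (swap_exp i)"
  by (metis injI swap_exp_swap_exp)

lemma swap_exp_eq_iff: "swap_exp i \<alpha> = \<beta> \<longleftrightarrow> \<alpha> = swap_exp i \<beta>"
  by (metis swap_exp_swap_exp)

lemma swap_exp_zero [simp]: "swap_exp i 0 = 0"
  by (simp add: poly_mapping_eq_iff fun_eq_iff lookup_swap_exp)

lemma swap_exp_add: "swap_exp i (\<alpha> + \<beta>) = swap_exp i \<alpha> + swap_exp i \<beta>"
  by (simp add: poly_mapping_eq_iff fun_eq_iff lookup_swap_exp lookup_add)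

lemma swap_exp_single: "swap_exp i (Poly_Mapping.single j c) = Poly_Mapping.single (swp i j) c"
  by (simp add: poly_mapping_eq_iff fun_eq_iff lookup_swap_exp lookup_single when_def)

lemma swap_exp_commute:
  assumes "i \<noteq> j" "Suc i \<noteq> j" "i \<noteq> Suc j"
  shows "swap_exp i (swap_exp j \<beta>) = swap_exp j (swap_exp i \<beta>)"
  using swp_commute[OF assms] by (simp add: poly_mapping_eq_iff fun_eq_iff lookup_swap_exp)

lemma keys_swap_exp_subset:
  assumes "Poly_Mapping.keys \<beta> \<subseteq> {1..n}" "1 \<le> i" "i < n"
  shows "Poly_Mapping.keys (swap_exp i \<beta>) \<subseteq> {1..n}"
proof
  fix k assume "k \<in> Poly_Mapping.keys (swap_exp i \<beta>)"
  then have "swp i k \<in> Poly_Mapping.keys \<beta>" by (simp add: in_keys_iff lookup_swap_exp)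
  then have "swp i k \<in> {1..n}" using assms(1) by auto
  then show "k \<in> {1..n}" using assms(2,3) by (auto simp: swp_def split: if_splits)
qed

lemma lookup_swap_poly: "Poly_Mapping.lookup (swap_poly i f) \<beta> = Poly_Mapping.lookup f (swap_exp i \<beta>)"
  unfolding swap_poly_def by (simp add: lookup_map_key_inj inj_swap_exp)

lemma swap_poly_zero [simp]: "swap_poly i 0 = 0"
  by (simp add: poly_mapping_eq_iff fun_eq_iff lookup_swap_poly)

lemma swap_poly_add: "swap_poly i (f + g) = swap_poly i f + swap_poly i g"
  by (simp add: poly_mapping_eq_iff fun_eq_iff lookup_swap_poly lookup_add)

lemma swap_poly_diff: "swap_poly i (f - g) = swap_poly i f - swap_poly i g"
  by (simp add: poly_mapping_eq_iff fun_eq_iff lookup_swap_poly lookup_minus)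

lemma swap_poly_sum: "swap_poly i (sum f A) = (\<Sum>x\<in>A. swap_poly i (f x))"
  by (induction A rule: infinite_finite_induct) (auto simp: swap_poly_zero swap_poly_add)

lemma swap_poly_single: "swap_poly i (Poly_Mapping.single \<beta> c) = Poly_Mapping.single (swap_exp i \<beta>) c"
  by (rule poly_mapping_eqI) (simp only: lookup_swap_poly lookup_single swap_exp_eq_iff)

lemma swap_poly_var: "swap_poly i (var j) = var (swp i j)"
  by (simp add: var_def swap_poly_single swap_exp_single)

lemma swap_poly_mult: "swap_poly i (f * g) = swap_poly i f * swap_poly i (g :: mpoly)"
proof -
  have single: "swap_poly i (Poly_Mapping.single \<alpha> a * Poly_Mapping.single \<beta> b) =
      swap_poly i (Poly_Mapping.single \<alpha> a) * swap_poly i (Poly_Mapping.single \<beta> b)" for \<alpha> \<beta> a b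
    by (simp add: mult_single swap_poly_single swap_exp_add)
  define F where "F = (\<lambda>\<alpha>. Poly_Mapping.single \<alpha> (Poly_Mapping.lookup f \<alpha>))"
  define G where "G = (\<lambda>\<beta>. Poly_Mapping.single \<beta> (Poly_Mapping.lookup g \<beta>))"
  have "swap_poly i (f * g) = swap_poly i (sum F (Poly_Mapping.keys f) * sum G (Poly_Mapping.keys g))"
    by (simp add: F_def G_def poly_mapping_sum_singles)
  also have "\<dots> = (\<Sum>\<alpha>\<in>Poly_Mapping.keys f. \<Sum>\<beta>\<in>Poly_Mapping.keys g. swap_poly i (F \<alpha>) * swap_poly i (G \<beta>))"
    unfolding sum_product by (simp only: swap_poly_sum F_def G_def single)
  also have "\<dots> = swap_poly i (sum F (Poly_Mapping.keys f)) * swap_poly i (sum G (Poly_Mapping.keys g))"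
    by (simp only: swap_poly_sum sum_product)
  finally show ?thesis by (simp add: F_def G_def poly_mapping_sum_singles)
qed

lemma swap_poly_commute:
  assumes "i \<noteq> j" "Suc i \<noteq> j" "i \<noteq> Suc j"
  shows "swap_poly i (swap_poly j f) = swap_poly j (swap_poly i f)"
  by (simp add: poly_mapping_eq_iff fun_eq_iff lookup_swap_poly swap_exp_commute[OF assms])

section \<open>The isobaric divided difference \<open>\<pi>\<^sub>i f = \<partial>\<^sub>i (x\<^sub>i f)\<close>\<close>

definition set_pair :: "nat \<Rightarrow> (nat \<Rightarrow>\<^sub>0 nat) \<Rightarrow> nat \<Rightarrow> nat \<Rightarrow> (nat \<Rightarrow>\<^sub>0 nat)" where
  "set_pair i \<gamma> p q = Poly_Mapping.update i p (Poly_Mapping.update (Suc i) q \<gamma>)"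

lemma lookup_set_pair:
  "Poly_Mapping.lookup (set_pair i \<gamma> p q) j =
    (if j = i then p else if j = Suc i then q else Poly_Mapping.lookup \<gamma> j)"
  by (simp add: set_pair_def lookup_update)

lemma set_pair_self: "set_pair i \<gamma> (Poly_Mapping.lookup \<gamma> i) (Poly_Mapping.lookup \<gamma> (Suc i)) = \<gamma>"
  by (simp add: poly_mapping_eq_iff fun_eq_iff lookup_set_pair)

lemma swap_exp_set_pair: "swap_exp i (set_pair i \<gamma> p q) = set_pair i \<gamma> q p"
  by (simp add: poly_mapping_eq_iff fun_eq_iff lookup_set_pair lookup_swap_exp swp_def)

lemma var_mult_monom_set_pair: "var i * monom (set_pair i \<gamma> p q) = monom (set_pair i \<gamma> (Suc p) q)"
proof -
  have "Poly_Mapping.single i 1 + set_pair i \<gamma> p q = set_pair i \<gamma> (Suc p) q"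
    by (simp add: poly_mapping_eq_iff fun_eq_iff lookup_add lookup_set_pair lookup_single when_def)
  then show ?thesis by (simp add: var_def monom_def mult_single)
qed

lemma var_Suc_mult_monom_set_pair: "var (Suc i) * monom (set_pair i \<gamma> p q) = monom (set_pair i \<gamma> p (Suc q))"
proof -
  have "Poly_Mapping.single (Suc i) 1 + set_pair i \<gamma> p q = set_pair i \<gamma> p (Suc q)"
    by (simp add: poly_mapping_eq_iff fun_eq_iff lookup_add lookup_set_pair lookup_single when_def)
  then show ?thesis by (simp add: var_def monom_def mult_single)
qed

definition demazure_monom :: "nat \<Rightarrow> (nat \<Rightarrow>\<^sub>0 nat) \<Rightarrow> mpoly" where
  "demazure_monom i \<gamma> = (let a = Poly_Mapping.lookup \<gamma> i; b = Poly_Mapping.lookup \<gamma> (Suc i) in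
     if b \<le> a then (\<Sum>k\<in>{b..a}. monom (set_pair i \<gamma> k (a + b - k)))
     else - (\<Sum>k\<in>{Suc a..b - 1}. monom (set_pair i \<gamma> k (a + b - k))))"

definition demazure :: "nat \<Rightarrow> mpoly \<Rightarrow> mpoly" where
  "demazure i g = (\<Sum>\<gamma>\<in>Poly_Mapping.keys g.
     Poly_Mapping.single 0 (Poly_Mapping.lookup g \<gamma>) * demazure_monom i \<gamma>)"

lemma diff_vars_mult_demazure_monom:
  "(var i - var (Suc i)) * demazure_monom i \<gamma> = var i * monom \<gamma> - swap_poly i (var i * monom \<gamma>)"
proof -
  define a where "a = Poly_Mapping.lookup \<gamma> i"
  define b where "b = Poly_Mapping.lookup \<gamma> (Suc i)"
  define X where "X = (\<lambda>p q. monom (set_pair i \<gamma> p q))"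
  define F where "F = (\<lambda>k. X k (Suc (a + b) - k))"
  have telescope: "(var i - var (Suc i)) * X k (a + b - k) = F (Suc k) - F k" if "k \<le> a + b" for k
  proof -
    have "(var i - var (Suc i)) * X k (a + b - k) = X (Suc k) (a + b - k) - X k (Suc (a + b - k))"
      by (simp add: X_def left_diff_distrib var_mult_monom_set_pair var_Suc_mult_monom_set_pair)
    also have "\<dots> = F (Suc k) - F k" using that by (simp add: F_def Suc_diff_le)
    finally show ?thesis .
  qed
  have rhs: "var i * monom \<gamma> - swap_poly i (var i * monom \<gamma>) = F (Suc a) - F b"
  proof -
    have "var i * monom \<gamma> = X (Suc a) b"
      using var_mult_monom_set_pair[of i \<gamma> a b] by (simp add: X_def a_def b_def set_pair_self)
    then show ?thesis by (simp add: X_def F_def monom_def swap_poly_single swap_exp_set_pair)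
  qed
  show ?thesis
  proof (cases "b \<le> a")
    case True
    have "demazure_monom i \<gamma> = (\<Sum>k\<in>{b..a}. X k (a + b - k))"
      using True by (simp add: demazure_monom_def a_def b_def X_def Let_def)
    then have "(var i - var (Suc i)) * demazure_monom i \<gamma> = (\<Sum>k\<in>{b..a}. F (Suc k) - F k)"
      by (simp add: sum_distrib_left telescope)
    also have "\<dots> = F (Suc a) - F b" using True by (simp add: sum_Suc_diff)
    finally show ?thesis using rhs by simp
  next
    case False
    have "demazure_monom i \<gamma> = - (\<Sum>k\<in>{Suc a..b - 1}. X k (a + b - k))"
      using False by (simp add: demazure_monom_def a_def b_def X_def Let_def)
    moreover have "(\<Sum>k\<in>{Suc a..b - 1}. (var i - var (Suc i)) * X k (a + b - k)) =
        (\<Sum>k\<in>{Suc a..b - 1}. F (Suc k) - F k)"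
      by (rule sum.cong) (auto intro: telescope)
    ultimately have "(var i - var (Suc i)) * demazure_monom i \<gamma> = - (\<Sum>k\<in>{Suc a..b - 1}. F (Suc k) - F k)"
      by (simp add: sum_distrib_left)
    also have "\<dots> = F (Suc a) - F b" using False by (subst sum_Suc_diff) auto
    finally show ?thesis using rhs by simp
  qed
qed

lemma diff_vars_mult_demazure:
  "(var i - var (Suc i)) * demazure i g = var i * g - swap_poly i (var i * g)"
proof -
  define c where "c = (\<lambda>\<gamma>. Poly_Mapping.single 0 (Poly_Mapping.lookup g \<gamma>) :: mpoly)"
  have c_monom: "c \<gamma> * monom \<gamma> = Poly_Mapping.single \<gamma> (Poly_Mapping.lookup g \<gamma>)" for \<gamma>
    by (simp add: c_def monom_def mult_single)
  have swap_c: "swap_poly i (c \<gamma>) = c \<gamma>" for \<gamma>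
    by (simp add: c_def swap_poly_single swap_exp_zero)
  have termwise: "(var i - var (Suc i)) * (c \<gamma> * demazure_monom i \<gamma>) =
      var i * Poly_Mapping.single \<gamma> (Poly_Mapping.lookup g \<gamma>)
      - swap_poly i (var i * Poly_Mapping.single \<gamma> (Poly_Mapping.lookup g \<gamma>))" for \<gamma>
  proof -
    have "(var i - var (Suc i)) * (c \<gamma> * demazure_monom i \<gamma>) =
        c \<gamma> * (var i * monom \<gamma> - swap_poly i (var i * monom \<gamma>))"
      by (simp only: mult.left_commute [of _ "c \<gamma>"] diff_vars_mult_demazure_monom)
    also have "\<dots> = var i * (c \<gamma> * monom \<gamma>) - swap_poly i (var i * (c \<gamma> * monom \<gamma>))"
      by (simp only: right_diff_distrib swap_poly_mult swap_c mult.left_commute)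
    finally show ?thesis unfolding c_monom .
  qed
  have "(var i - var (Suc i)) * demazure i g =
      (\<Sum>\<gamma>\<in>Poly_Mapping.keys g. var i * Poly_Mapping.single \<gamma> (Poly_Mapping.lookup g \<gamma>)
        - swap_poly i (var i * Poly_Mapping.single \<gamma> (Poly_Mapping.lookup g \<gamma>)))"
    using termwise [unfolded c_def] by (simp add: demazure_def sum_distrib_left)
  also have "\<dots> = var i * g - swap_poly i (var i * g)"
    by (subst (3 4) poly_mapping_sum_singles [of g, symmetric])
       (simp add: sum_subtractf sum_distrib_left swap_poly_sum)
  finally show ?thesis .
qed

lemma var_neq_var_Suc: "var i \<noteq> var (Suc i)"
proof -
  have "Poly_Mapping.single i (1::nat) \<noteq> Poly_Mapping.single (Suc i) 1"
    by (metis lookup_single_eq lookup_single_not_eq n_not_Suc_n one_neq_zero)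
  then show ?thesis by (simp add: var_def frag_of_eq)
qed

lemma ddiff_var_mult: "ddiff i (var i * g) = demazure i g"
  unfolding ddiff_def
proof (rule the_equality)
  show "(var i - var (Suc i)) * demazure i g = var i * g - swap_poly i (var i * g)"
    by (rule diff_vars_mult_demazure)
  fix h assume "(var i - var (Suc i)) * h = var i * g - swap_poly i (var i * g)"
  then have "(var i - var (Suc i)) * h = (var i - var (Suc i)) * demazure i g"
    by (simp add: diff_vars_mult_demazure)
  then show "h = demazure i g" using var_neq_var_Suc by simp
qed

lemma diff_vars_mult_demazure_demazure:
  assumes "i \<noteq> j" "Suc i \<noteq> j" "i \<noteq> Suc j"
  shows "(var i - var (Suc i)) * (var j - var (Suc j)) * demazure i (demazure j u) =
     var i * var j * u - swap_poly j (var i * var j * u) - swap_poly i (var i * var j * u)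
     + swap_poly i (swap_poly j (var i * var j * u))"
proof -
  define L where "L = var j - var (Suc j)"
  define v where "v = demazure j u"
  have swap_i_L: "swap_poly i L = L" and swap_j_var: "swap_poly j (var i) = var i"
    using assms by (auto simp: L_def swap_poly_diff swap_poly_var swp_def)
  have "(var i - var (Suc i)) * L * demazure i v = L * ((var i - var (Suc i)) * demazure i v)"
    by (simp only: ac_simps)
  also have "\<dots> = L * (var i * v - swap_poly i (var i * v))"
    by (simp only: diff_vars_mult_demazure)
  also have "\<dots> = var i * (L * v) - swap_poly i (var i * (L * v))"
    by (simp add: right_diff_distrib swap_poly_mult swap_i_L ac_simps)
  also have "L * v = var j * u - swap_poly j (var j * u)"
    by (simp add: L_def v_def diff_vars_mult_demazure)
  also have "var i * (var j * u - swap_poly j (var j * u)) =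
      var i * var j * u - swap_poly j (var i * var j * u)"
    by (simp add: right_diff_distrib swap_poly_mult swap_j_var mult.assoc)
  finally show ?thesis by (simp add: L_def v_def swap_poly_diff)
qed

lemma demazure_commute:
  assumes "i \<noteq> j" "Suc i \<noteq> j" "i \<noteq> Suc j"
  shows "demazure i (demazure j u) = demazure j (demazure i u)"
proof -
  define Li where "Li = var i - var (Suc i)"
  define Lj where "Lj = var j - var (Suc j)"
  define X where "X = var i * var j * u"
  have X_commute: "var j * var i * u = X" by (simp add: X_def ac_simps)
  have "Li * Lj * demazure i (demazure j u) =
      X - swap_poly j X - swap_poly i X + swap_poly i (swap_poly j X)"
    unfolding Li_def Lj_def X_def by (rule diff_vars_mult_demazure_demazure[OF assms])
  also have "\<dots> = X - swap_poly i X - swap_poly j X + swap_poly j (swap_poly i X)"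
    by (simp add: swap_poly_commute[OF assms] diff_diff_eq add.commute)
  also have "\<dots> = Lj * Li * demazure j (demazure i u)"
    unfolding Li_def Lj_def X_commute [symmetric]
    by (rule diff_vars_mult_demazure_demazure [symmetric]) (use assms in auto)
  finally have "Li * Lj * demazure i (demazure j u) = Li * Lj * demazure j (demazure i u)"
    by (simp add: mult.commute)
  then show ?thesis using var_neq_var_Suc by (simp add: Li_def Lj_def)
qed

section \<open>Existence and uniqueness of key polynomials\<close>

definition ascent_weight :: "nat \<Rightarrow> (nat \<Rightarrow>\<^sub>0 nat) \<Rightarrow> nat" where
  "ascent_weight n \<beta> = (\<Sum>k\<in>{1..n}. k * Poly_Mapping.lookup \<beta> k)"

lemma sum_remove_adjacent:
  assumes "finite A" "i \<in> A" "Suc i \<in> A"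
  shows "sum f A = f i + f (Suc i) + sum f (A - {i, Suc i})"
proof -
  have "sum f A = f i + sum f (A - {i})" using assms by (simp add: sum.remove)
  also have "sum f (A - {i}) = f (Suc i) + sum f (A - {i} - {Suc i})"
    using assms by (subst sum.remove[of _ "Suc i"]) auto
  finally show ?thesis by (simp add: Diff_insert2[symmetric] insert_commute add.assoc)
qed

lemma ascent_weight_swap_exp_less:
  assumes "1 \<le> i" "i < n" "Poly_Mapping.lookup \<beta> i < Poly_Mapping.lookup \<beta> (Suc i)"
  shows "ascent_weight n (swap_exp i \<beta>) < ascent_weight n \<beta>"
proof -
  have rest: "(\<Sum>k\<in>{1..n} - {i, Suc i}. k * Poly_Mapping.lookup (swap_exp i \<beta>) k) =
      (\<Sum>k\<in>{1..n} - {i, Suc i}. k * Poly_Mapping.lookup \<beta> k)"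
    by (rule sum.cong) (auto simp: lookup_swap_exp swp_def)
  have "i * Poly_Mapping.lookup \<beta> (Suc i) + Suc i * Poly_Mapping.lookup \<beta> i <
      i * Poly_Mapping.lookup \<beta> i + Suc i * Poly_Mapping.lookup \<beta> (Suc i)"
    using assms(3) by (simp add: algebra_simps)
  then show ?thesis
    unfolding ascent_weight_def using assms rest
    by (subst (1 2) sum_remove_adjacent[of _ i]) (auto simp: lookup_swap_exp swp_def)
qed

lemma is_key_exists:
  assumes "Poly_Mapping.keys \<beta> \<subseteq> {1..n}"
  shows "\<exists>f. is_key n \<beta> f"
  using assms
proof (induction "ascent_weight n \<beta>" arbitrary: \<beta> rule: less_induct)
  case less
  show ?case
  proof (cases "\<forall>i. 1 \<le> i \<and> i < n \<longrightarrow> Poly_Mapping.lookup \<beta> (Suc i) \<le> Poly_Mapping.lookup \<beta> i")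
    case True
    then show ?thesis using is_key.dominant[OF less.prems] by blast
  next
    case False
    then obtain i where i: "1 \<le> i" "i < n" "Poly_Mapping.lookup \<beta> i < Poly_Mapping.lookup \<beta> (Suc i)"
      by (auto simp: not_le)
    obtain g where "is_key n (swap_exp i \<beta>) g"
      using less.hyps[OF ascent_weight_swap_exp_less[OF i] keys_swap_exp_subset[OF less.prems i(1,2)]]
      by blast
    then show ?thesis using is_key.step[OF less.prems i] by blast
  qed
qed

lemma is_key_demazure_cases:
  assumes "is_key n \<beta> f"
  obtains "\<forall>i. 1 \<le> i \<and> i < n \<longrightarrow> Poly_Mapping.lookup \<beta> (Suc i) \<le> Poly_Mapping.lookup \<beta> i" "f = monom \<beta>"
  | i g where "1 \<le> i" "i < n" "Poly_Mapping.lookup \<beta> i < Poly_Mapping.lookup \<beta> (Suc i)"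
      "is_key n (swap_exp i \<beta>) g" "f = demazure i g"
  using assms by (cases rule: is_key.cases) (auto simp: ddiff_var_mult)

lemma is_key_at_commuting_ascents:
  assumes keys: "Poly_Mapping.keys \<beta> \<subseteq> {1..n}"
    and i: "1 \<le> i" "i < n" "Poly_Mapping.lookup \<beta> i < Poly_Mapping.lookup \<beta> (Suc i)"
    and j: "1 \<le> j" "j < n" "Poly_Mapping.lookup \<beta> j < Poly_Mapping.lookup \<beta> (Suc j)"
    and far: "i \<noteq> j" "Suc i \<noteq> j" "i \<noteq> Suc j"
  obtains h where "is_key n (swap_exp i \<beta>) (demazure j h)" "is_key n (swap_exp j \<beta>) (demazure i h)"
proof -
  have keys_i: "Poly_Mapping.keys (swap_exp i \<beta>) \<subseteq> {1..n}"
    and keys_j: "Poly_Mapping.keys (swap_exp j \<beta>) \<subseteq> {1..n}"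
    using keys_swap_exp_subset[OF keys i(1,2)] keys_swap_exp_subset[OF keys j(1,2)] .
  define \<beta>' where "\<beta>' = swap_exp j (swap_exp i \<beta>)"
  have \<beta>'_commute: "swap_exp i (swap_exp j \<beta>) = \<beta>'"
    using swap_exp_commute[OF far] by (simp add: \<beta>'_def)
  obtain h where h: "is_key n \<beta>' h"
    using is_key_exists[OF keys_swap_exp_subset[OF keys_i j(1,2)]] by (auto simp: \<beta>'_def)
  have "is_key n (swap_exp i \<beta>) (demazure j h)"
    using is_key.step[OF keys_i j(1,2) _ h[unfolded \<beta>'_def]] j(3) far
    by (simp add: ddiff_var_mult lookup_swap_exp swp_def)
  moreover have "is_key n (swap_exp j \<beta>) (demazure i h)"
    using is_key.step[OF keys_j i(1,2) _ h[folded \<beta>'_commute]] i(3) far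
    by (simp add: ddiff_var_mult lookup_swap_exp swp_def)
  ultimately show ?thesis by (rule that)
qed

text \<open>Uniqueness is only needed for exponent vectors with entries in \<open>{0, t}\<close>: two distinct
  ascents of such a vector are never adjacent, so the corresponding operators \<open>\<pi>\<^sub>i\<close> commute
  and no braid relation is required.\<close>

lemma is_key_unique:
  assumes "\<forall>k. Poly_Mapping.lookup \<beta> k = 0 \<or> Poly_Mapping.lookup \<beta> k = t"
    and "Poly_Mapping.keys \<beta> \<subseteq> {1..n}" "is_key n \<beta> f" "is_key n \<beta> g"
  shows "f = g"
  using assms
proof (induction "ascent_weight n \<beta>" arbitrary: \<beta> f g rule: less_induct)
  case less
  have two_valued: "\<forall>k. Poly_Mapping.lookup (swap_exp i \<beta>) k = 0 \<or> Poly_Mapping.lookup (swap_exp i \<beta>) k = t" for i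
    using less.prems(1) by (simp add: lookup_swap_exp)
  from less.prems(3) show ?case
  proof (cases rule: is_key_demazure_cases)
    case 1
    with less.prems(4) show ?thesis by (cases rule: is_key_demazure_cases) auto
  next
    case (2 i f')
    note i = 2(1-3) and f' = 2(4) and f = 2(5)
    from less.prems(4) show ?thesis
    proof (cases rule: is_key_demazure_cases)
      case 1
      then show ?thesis using i by auto
    next
      case (2 j g')
      note j = 2(1-3) and g' = 2(4) and g = 2(5)
      have keys_i: "Poly_Mapping.keys (swap_exp i \<beta>) \<subseteq> {1..n}"
        using keys_swap_exp_subset[OF less.prems(2) i(1,2)] .
      have keys_j: "Poly_Mapping.keys (swap_exp j \<beta>) \<subseteq> {1..n}"
        using keys_swap_exp_subset[OF less.prems(2) j(1,2)] .
      have IH_i: "h = h'" if "is_key n (swap_exp i \<beta>) h" "is_key n (swap_exp i \<beta>) h'" for h h'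
        using less.hyps[OF ascent_weight_swap_exp_less[OF i] two_valued keys_i that] .
      have IH_j: "h = h'" if "is_key n (swap_exp j \<beta>) h" "is_key n (swap_exp j \<beta>) h'" for h h'
        using less.hyps[OF ascent_weight_swap_exp_less[OF j] two_valued keys_j that] .
      show ?thesis
      proof (cases "i = j")
        case True
        then have "f' = g'" using IH_i f' g' by blast
        then show ?thesis using f g True by simp
      next
        case False
        have far: "i \<noteq> j" "Suc i \<noteq> j" "i \<noteq> Suc j"
          using False i(3) j(3) less.prems(1) by (metis not_less_zero less_irrefl)+
        obtain h where "is_key n (swap_exp i \<beta>) (demazure j h)" "is_key n (swap_exp j \<beta>) (demazure i h)"
          using is_key_at_commuting_ascents[OF less.prems(2) i j far] .
        then have "f' = demazure j h" "g' = demazure i h" using IH_i IH_j f' g' by blast+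
        then show ?thesis using f g demazure_commute[OF far] by simp
      qed
    qed
  qed
qed

lemma key_poly_eqI:
  assumes "\<forall>k. Poly_Mapping.lookup \<beta> k = 0 \<or> Poly_Mapping.lookup \<beta> k = t"
    and "Poly_Mapping.keys \<beta> \<subseteq> {1..n}" "is_key n \<beta> f"
  shows "key_poly n \<beta> = f"
  unfolding key_poly_def using assms by (blast intro: the_equality is_key_unique)

section \<open>The Gale order under adjacent transpositions\<close>

lemma sorted_list_of_set_replace:
  assumes "finite A" "x \<in> A" "y \<notin> A" "\<forall>z\<in>A - {x}. z < x \<longleftrightarrow> z < y"
  shows "\<exists>p < card A. sorted_list_of_set A ! p = x \<and>
    sorted_list_of_set (insert y (A - {x})) = (sorted_list_of_set A)[p := y]"
proof -
  define L where "L = sorted_list_of_set A"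
  have sorted: "sorted_wrt (<) L" and set_L: "set L = A" and distinct: "distinct L"
    using assms(1) by (auto simp: L_def)
  obtain p where p: "p < length L" "L ! p = x" using assms(2) set_L by (metis in_set_conv_nth)
  have in_A: "L ! k \<in> A" if "k < length L" for k using that set_L nth_mem by blast
  have "sorted_wrt (<) (L[p := y])"
    unfolding sorted_wrt_iff_nth_less
  proof (intro allI impI)
    fix q r assume qr: "q < r" "r < length (L[p := y])"
    then have r: "r < length L" by simp
    have less: "L ! q < L ! r" using sorted qr r by (auto simp: sorted_wrt_iff_nth_less)
    consider "q = p" | "r = p" | "q \<noteq> p" "r \<noteq> p" by blast
    then show "L[p := y] ! q < L[p := y] ! r"
    proof cases
      case 1
      then have "L ! r \<in> A - {x}" using less p in_A[OF r] by auto
      then have "L ! r < x \<longleftrightarrow> L ! r < y" using assms(4) by blast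
      then have "\<not> L ! r < y" using less 1 p by (metis less_asym)
      moreover have "L ! r \<noteq> y" using assms(3) in_A[OF r] by auto
      ultimately have "y < L ! r" by simp
      then show ?thesis using 1 qr r by auto
    next
      case 2
      then have "L ! q \<in> A - {x}" using less p in_A[of q] qr r by auto
      then have "L ! q < y" using assms(4) less 2 p by auto
      then show ?thesis using 2 qr r p by auto
    qed (use less in simp)
  qed
  moreover have "set (L[p := y]) = insert y (A - {x})"
    using set_update_distinct[OF distinct p(1)] p set_L by simp
  ultimately have "sorted_list_of_set (insert y (A - {x})) = L[p := y]"
    by (metis sorted_list_of_set.idem_if_sorted_distinct strict_sorted_iff)
  then show ?thesis using p assms(1) by (auto simp: L_def)
qed

lemma swp_image_up: "i \<in> T \<Longrightarrow> Suc i \<notin> T \<Longrightarrow> swp i ` T = insert (Suc i) (T - {i})"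
  by (auto simp: swp_def image_iff split: if_splits)

lemma swp_image_down: "Suc i \<in> T \<Longrightarrow> i \<notin> T \<Longrightarrow> swp i ` T = insert i (T - {Suc i})"
  by (auto simp: swp_def image_iff split: if_splits)

lemma swp_image_eq: "(i \<in> T \<longleftrightarrow> Suc i \<in> T) \<Longrightarrow> swp i ` T = T"
  by (auto simp: swp_def image_iff split: if_splits)

lemma sorted_list_of_set_swp_image_up:
  assumes "finite A" "i \<in> A" "Suc i \<notin> A"
  obtains p where "p < card A" "sorted_list_of_set A ! p = i"
    "sorted_list_of_set (swp i ` A) = (sorted_list_of_set A)[p := Suc i]"
proof -
  have "\<forall>z\<in>A - {i}. z < i \<longleftrightarrow> z < Suc i" using assms(3) by (auto simp: less_Suc_eq)
  then show ?thesis
    using that sorted_list_of_set_replace[OF assms] swp_image_up[OF assms(2,3)] by metis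
qed

lemma sorted_list_of_set_swp_image_down:
  assumes "finite A" "Suc i \<in> A" "i \<notin> A"
  obtains p where "p < card A" "sorted_list_of_set A ! p = Suc i"
    "sorted_list_of_set (swp i ` A) = (sorted_list_of_set A)[p := i]"
proof -
  have "\<forall>z\<in>A - {Suc i}. z < Suc i \<longleftrightarrow> z < i" using assms(3) by (auto simp: less_Suc_eq)
  then show ?thesis
    using that sorted_list_of_set_replace[OF assms] swp_image_down[OF assms(2,3)] by metis
qed

lemma sorted_list_of_set_nth_mem: "finite A \<Longrightarrow> q < card A \<Longrightarrow> sorted_list_of_set A ! q \<in> A"
  by (metis length_sorted_list_of_set nth_mem set_sorted_list_of_set)

lemma gale_le_refl: "finite S \<Longrightarrow> gale_le S S"
  by (simp add: gale_le_def)

lemma gale_le_of_gale_le_swp_image: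
  assumes "finite S" "Suc i \<in> S" "i \<notin> S" "gale_le T (swp i ` S)"
  shows "gale_le T S"
proof -
  obtain p where p: "p < card S" "sorted_list_of_set S ! p = Suc i"
    "sorted_list_of_set (swp i ` S) = (sorted_list_of_set S)[p := i]"
    using sorted_list_of_set_swp_image_down[OF assms(1-3)] by blast
  then have "sorted_list_of_set (swp i ` S) ! q \<le> sorted_list_of_set S ! q" for q
    by (cases "q = p") (auto simp: nth_list_update)
  then show ?thesis using assms(4) card_swp_image[of i S] unfolding gale_le_def by (metis le_trans)
qed

lemma gale_le_swp_image:
  assumes fin: "finite S" "finite T" and S: "Suc i \<in> S" "i \<notin> S" and "gale_le T S"
  shows "gale_le (swp i ` T) S"
proof -
  have le: "sorted_list_of_set T ! q \<le> sorted_list_of_set S ! q" if "q < card T" for q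
    using \<open>gale_le T S\<close> that by (simp add: gale_le_def)
  have card: "card (swp i ` T) = card S" using \<open>gale_le T S\<close> by (simp add: gale_le_def card_swp_image)
  consider "i \<in> T \<longleftrightarrow> Suc i \<in> T" | "i \<in> T" "Suc i \<notin> T" | "Suc i \<in> T" "i \<notin> T" by blast
  then show ?thesis
  proof cases
    case 1
    then show ?thesis using swp_image_eq \<open>gale_le T S\<close> by simp
  next
    case 2
    obtain p where p: "p < card T" "sorted_list_of_set T ! p = i"
      "sorted_list_of_set (swp i ` T) = (sorted_list_of_set T)[p := Suc i]"
      using sorted_list_of_set_swp_image_up[OF fin(2) 2] .
    have "p < card S" using p(1) card by (simp add: card_swp_image)
    then have "sorted_list_of_set S ! p \<noteq> i" using sorted_list_of_set_nth_mem[OF fin(1)] S by metis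
    then have "Suc i \<le> sorted_list_of_set S ! p" using le[OF p(1)] p(2) by simp
    then have "sorted_list_of_set (swp i ` T) ! q \<le> sorted_list_of_set S ! q" if "q < card T" for q
      using p le that by (cases "q = p") (auto simp: nth_list_update)
    then show ?thesis using card unfolding gale_le_def card_swp_image by simp
  next
    case 3
    obtain p where p: "p < card T" "sorted_list_of_set T ! p = Suc i"
      "sorted_list_of_set (swp i ` T) = (sorted_list_of_set T)[p := i]"
      using sorted_list_of_set_swp_image_down[OF fin(2) 3] by blast
    have "sorted_list_of_set (swp i ` T) ! q \<le> sorted_list_of_set T ! q" for q
      using p by (cases "q = p") (auto simp: nth_list_update)
    then show ?thesis using le card unfolding gale_le_def card_swp_image by (metis le_trans)
  qed
qed

text \<open>\<open>S\<close> has \<open>i + 1\<close> at some position \<open>p\<close>. \<open>T\<close> can only have \<open>i + 1\<close> there as well if it also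
  contains \<open>i\<close>, at an earlier position; but the entry of \<open>S\<close> at position \<open>p - 1\<close> is below \<open>i\<close>,
  contradicting \<open>T \<le> S\<close>.\<close>

lemma gale_le_swp_image_right:
  assumes fin: "finite S" "finite T" and S: "Suc i \<in> S" "i \<notin> S" and "gale_le T S"
    and T: "\<not> (Suc i \<in> T \<and> i \<notin> T)"
  shows "gale_le T (swp i ` S)"
proof -
  define LS where "LS = sorted_list_of_set S"
  define LT where "LT = sorted_list_of_set T"
  obtain p where p: "p < card S" "LS ! p = Suc i" "sorted_list_of_set (swp i ` S) = LS[p := i]"
    using sorted_list_of_set_swp_image_down[OF fin(1) S] unfolding LS_def by blast
  have card: "card T = card S" using \<open>gale_le T S\<close> by (simp add: gale_le_def)
  have "length LS = card S" by (simp add: LS_def)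
  have le: "LT ! q \<le> LS ! q" if "q < card T" for q
    using \<open>gale_le T S\<close> that by (simp add: gale_le_def LS_def LT_def)
  have "sorted_wrt (<) LT" "sorted_wrt (<) LS" by (simp_all add: LT_def LS_def)
  then have sorted_T: "q < r \<Longrightarrow> r < card T \<Longrightarrow> LT ! q < LT ! r"
    and sorted_S: "q < r \<Longrightarrow> r < card S \<Longrightarrow> LS ! q < LS ! r" for q r
    by (simp_all add: LT_def LS_def sorted_wrt_iff_nth_less)
  have pT: "p < card T" using p(1) card by simp
  have "LT ! p \<le> i"
  proof (rule ccontr)
    assume "\<not> LT ! p \<le> i"
    then have "LT ! p = Suc i" using le[OF pT] p(2) by simp
    then have "i \<in> T" using T sorted_list_of_set_nth_mem[OF fin(2) pT] by (auto simp: LT_def)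
    then obtain r where r: "r < card T" "LT ! r = i"
      using fin(2) by (metis in_set_conv_nth set_sorted_list_of_set length_sorted_list_of_set LT_def)
    have "r < p" using sorted_T[of p r] r \<open>LT ! p = Suc i\<close> by (cases "r < p") (auto simp: not_less le_less)
    then have "r \<le> p - 1" by simp
    then have "i \<le> LT ! (p - 1)" using sorted_T[of r "p - 1"] r pT by (auto simp: le_less)
    also have "\<dots> \<le> LS ! (p - 1)" using le pT by simp
    finally have "i \<le> LS ! (p - 1)" .
    moreover have "LS ! (p - 1) < Suc i" using sorted_S[of "p - 1" p] p \<open>r < p\<close> by simp
    moreover have "LS ! (p - 1) \<in> S"
      using sorted_list_of_set_nth_mem[OF fin(1), of "p - 1"] p(1) by (simp add: LS_def)
    ultimately show False using S(2) by (metis less_Suc_eq_le le_antisym)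
  qed
  then have "LT ! q \<le> sorted_list_of_set (swp i ` S) ! q" if "q < card T" for q
    using p le[OF that] \<open>length LS = card S\<close> by (cases "q = p") (auto simp: nth_list_update)
  then show ?thesis using card card_swp_image[of i S] unfolding gale_le_def LT_def by simp
qed

lemma sorted_nth_ge_Suc:
  assumes "sorted_wrt (<) L" "\<forall>x\<in>set L. 1 \<le> x" "q < length L"
  shows "Suc q \<le> L ! q"
  using assms(3)
proof (induction q)
  case 0
  then show ?case using assms(2) nth_mem by fastforce
next
  case (Suc q)
  then have "L ! q < L ! Suc q" using assms(1) by (simp add: sorted_wrt_iff_nth_less)
  then show ?case using Suc by simp
qed

lemma gale_le_initial_segment:
  assumes "T \<subseteq> {1..n}" "gale_le T {1..m}"
  shows "T = {1..m}"
proof -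
  have "finite T" using assms(1) finite_subset by blast
  have length: "length (sorted_list_of_set T) = m" using assms(2) by (simp add: gale_le_def)
  have list_m: "sorted_list_of_set {1..m} = [1..<Suc m]"
    by (metis atLeastLessThanSuc_atLeastAtMost sorted_list_of_set_range)
  have "sorted_list_of_set T = [1..<Suc m]"
  proof (rule nth_equalityI)
    show "length (sorted_list_of_set T) = length [1..<Suc m]" using length by simp
    fix q assume q: "q < length (sorted_list_of_set T)"
    have "Suc q \<le> sorted_list_of_set T ! q"
      by (rule sorted_nth_ge_Suc) (use q assms(1) \<open>finite T\<close> in auto)
    moreover have "sorted_list_of_set T ! q \<le> sorted_list_of_set {1..m} ! q"
      using assms(2) q length by (simp add: gale_le_def)
    moreover have "sorted_list_of_set {1..m} ! q = Suc q"
      using q length unfolding list_m by (simp del: upt_Suc)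
    ultimately show "sorted_list_of_set T ! q = [1..<Suc m] ! q" using q length list_m by simp
  qed
  then show ?thesis using \<open>finite T\<close> by (metis set_sorted_list_of_set set_upt atLeastLessThanSuc_atLeastAtMost)
qed

section \<open>Exponent vectors and the dilated Schubert matroid polytope\<close>

definition scaled_indicator :: "nat \<Rightarrow> nat set \<Rightarrow> (nat \<Rightarrow>\<^sub>0 nat)" where
  "scaled_indicator t T = Poly_Mapping.map (\<lambda>k. t * k) (indicator_exp T)"

definition real_exp :: "(nat \<Rightarrow>\<^sub>0 nat) \<Rightarrow> (nat \<Rightarrow>\<^sub>0 real)" where
  "real_exp \<gamma> = Poly_Mapping.map real \<gamma>"

definition dilated_schubert_polytope :: "nat \<Rightarrow> nat \<Rightarrow> nat set \<Rightarrow> (nat \<Rightarrow>\<^sub>0 real) set" where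
  "dilated_schubert_polytope n t S = convex hull ((\<lambda>T. real t *\<^sub>R e_vec T) ` schubert_bases n S)"

definition swap_point :: "nat \<Rightarrow> (nat \<Rightarrow>\<^sub>0 real) \<Rightarrow> (nat \<Rightarrow>\<^sub>0 real)" where
  "swap_point i x = Poly_Mapping.map_key (swp i) x"

lemma lookup_indicator_exp:
  "finite T \<Longrightarrow> Poly_Mapping.lookup (indicator_exp T) j = (if j \<in> T then 1 else 0)"
  by (simp add: indicator_exp_def lookup_sum lookup_single when_def)

lemma lookup_scaled_indicator:
  "finite T \<Longrightarrow> Poly_Mapping.lookup (scaled_indicator t T) j = (if j \<in> T then t else 0)"
  by (simp add: scaled_indicator_def lookup_map_poly_mapping lookup_indicator_exp when_def)

lemma lookup_e_vec: "finite T \<Longrightarrow> Poly_Mapping.lookup (e_vec T) j = (if j \<in> T then 1 else 0)"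
  by (simp add: e_vec_def lookup_sum lookup_single when_def)

lemma lookup_real_exp: "Poly_Mapping.lookup (real_exp \<gamma>) j = real (Poly_Mapping.lookup \<gamma> j)"
  by (simp add: real_exp_def lookup_map_poly_mapping when_def)

lemma real_exp_scaled_indicator: "finite T \<Longrightarrow> real_exp (scaled_indicator t T) = real t *\<^sub>R e_vec T"
  by (rule poly_mapping_eqI)
     (simp add: lookup_real_exp lookup_scaled_indicator lookup_scaleR_poly_mapping lookup_e_vec)

lemma swap_exp_scaled_indicator: "finite T \<Longrightarrow> swap_exp i (scaled_indicator t T) = scaled_indicator t (swp i ` T)"
  by (rule poly_mapping_eqI) (simp add: lookup_swap_exp lookup_scaled_indicator mem_swp_image)

lemma keys_scaled_indicator: "finite T \<Longrightarrow> Poly_Mapping.keys (scaled_indicator t T) \<subseteq> T"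
  by (auto simp: in_keys_iff lookup_scaled_indicator split: if_splits)

lemma ascent_scaled_indicator:
  assumes "finite S"
    and "Poly_Mapping.lookup (scaled_indicator t S) i < Poly_Mapping.lookup (scaled_indicator t S) (Suc i)"
  shows "Suc i \<in> S" "i \<notin> S"
  using assms by (auto simp: lookup_scaled_indicator split: if_splits)

lemma finite_schubert_basis: "T \<in> schubert_bases n S \<Longrightarrow> finite T"
  by (auto simp: schubert_bases_def intro: finite_subset)

lemma dilated_schubert_polytope_swp_image_subset:
  assumes "finite S" "Suc i \<in> S" "i \<notin> S"
  shows "dilated_schubert_polytope n t (swp i ` S) \<subseteq> dilated_schubert_polytope n t S"
  unfolding dilated_schubert_polytope_def
  by (rule hull_mono) (auto simp: schubert_bases_def intro!: gale_le_of_gale_le_swp_image[OF assms])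

lemma lookup_le_of_mem_dilated_schubert_polytope:
  assumes "x \<in> dilated_schubert_polytope n t S"
  shows "Poly_Mapping.lookup x j \<le> real t"
proof -
  have "linear (\<lambda>x :: nat \<Rightarrow>\<^sub>0 real. Poly_Mapping.lookup x j)"
    by (rule linearI) (simp_all add: lookup_add lookup_scaleR_poly_mapping)
  then have "convex {x :: nat \<Rightarrow>\<^sub>0 real. Poly_Mapping.lookup x j \<le> real t}"
    using convex_linear_vimage[of _ "{..real t}"] by (simp add: vimage_def)
  then have "dilated_schubert_polytope n t S \<subseteq> {x. Poly_Mapping.lookup x j \<le> real t}"
    unfolding dilated_schubert_polytope_def
    by (rule hull_minimal [rotated])
       (auto simp: lookup_scaleR_poly_mapping lookup_e_vec finite_schubert_basis)
  then show ?thesis using assms by blast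
qed

lemma lookup_swap_point: "Poly_Mapping.lookup (swap_point i x) j = Poly_Mapping.lookup x (swp i j)"
  by (simp add: swap_point_def lookup_map_key_inj inj_swp)

lemma linear_swap_point: "linear (swap_point i)"
  by (rule linearI; rule poly_mapping_eqI; simp add: lookup_swap_point lookup_add lookup_scaleR_poly_mapping)

lemma swap_point_real_exp: "swap_point i (real_exp \<gamma>) = real_exp (swap_exp i \<gamma>)"
  by (rule poly_mapping_eqI) (simp add: lookup_swap_point lookup_real_exp lookup_swap_exp)

lemma swap_point_scaled_e_vec: "finite T \<Longrightarrow> swap_point i (c *\<^sub>R e_vec T) = c *\<^sub>R e_vec (swp i ` T)"
  by (rule poly_mapping_eqI) (simp add: lookup_swap_point lookup_scaleR_poly_mapping lookup_e_vec mem_swp_image)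

lemma swap_point_dilated_schubert_polytope:
  assumes "finite S" "Suc i \<in> S" "i \<notin> S" "1 \<le> i" "i < n"
    and "x \<in> dilated_schubert_polytope n t S"
  shows "swap_point i x \<in> dilated_schubert_polytope n t S"
proof -
  have "swap_point i x \<in> swap_point i ` dilated_schubert_polytope n t S"
    using assms(6) by blast
  also have "\<dots> = convex hull (swap_point i ` (\<lambda>T. real t *\<^sub>R e_vec T) ` schubert_bases n S)"
    unfolding dilated_schubert_polytope_def by (rule convex_hull_linear_image [OF linear_swap_point])
  also have "\<dots> \<subseteq> dilated_schubert_polytope n t S"
    unfolding dilated_schubert_polytope_def
  proof (rule hull_mono, safe)
    fix T assume T: "T \<in> schubert_bases n S"
    have "swp i ` T \<in> schubert_bases n S"
      using T assms gale_le_swp_image[OF assms(1) finite_schubert_basis[OF T] assms(2,3)] swp_image_subset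
      by (auto simp: schubert_bases_def)
    then show "swap_point i (real t *\<^sub>R e_vec T) \<in> (\<lambda>T. real t *\<^sub>R e_vec T) ` schubert_bases n S"
      using swap_point_scaled_e_vec[OF finite_schubert_basis[OF T]] by auto
  qed
  finally show ?thesis .
qed

lemma schubert_basis_swp_image:
  assumes "finite S" "Suc i \<in> S" "i \<notin> S" "1 \<le> i" "i < n" "T \<in> schubert_bases n S"
  shows "(if Suc i \<in> T \<and> i \<notin> T then swp i ` T else T) \<in> schubert_bases n (swp i ` S)"
proof -
  have T: "finite T" "T \<subseteq> {1..n}" "gale_le T S"
    using assms(6) by (auto simp: schubert_bases_def finite_schubert_basis)
  show ?thesis
  proof (cases "Suc i \<in> T \<and> i \<notin> T")
    case True
    then have "\<not> (Suc i \<in> swp i ` T \<and> i \<notin> swp i ` T)"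
      by (auto simp: mem_swp_image swp_def)
    then have "gale_le (swp i ` T) (swp i ` S)"
      using gale_le_swp_image_right[OF assms(1) finite_imageI[OF T(1)] assms(2,3)]
        gale_le_swp_image[OF assms(1) T(1) assms(2,3) T(3)] by blast
    then show ?thesis using True swp_image_subset[OF T(2) assms(4,5)] by (simp add: schubert_bases_def)
  next
    case False
    then show ?thesis
      using gale_le_swp_image_right[OF assms(1) T(1) assms(2,3) T(3) False] T(2)
      unfolding if_not_P[OF False] by (simp add: schubert_bases_def)
  qed
qed

section \<open>Support and extreme coefficients of \<open>\<pi>\<^sub>i\<close>\<close>

lemma keys_demazure_monom:
  assumes "\<delta> \<in> Poly_Mapping.keys (demazure_monom i \<gamma>)"
  obtains k where "min (Poly_Mapping.lookup \<gamma> i) (Poly_Mapping.lookup \<gamma> (Suc i)) \<le> k"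
    "k \<le> max (Poly_Mapping.lookup \<gamma> i) (Poly_Mapping.lookup \<gamma> (Suc i))"
    "\<delta> = set_pair i \<gamma> k (Poly_Mapping.lookup \<gamma> i + Poly_Mapping.lookup \<gamma> (Suc i) - k)"
proof -
  define a where "a = Poly_Mapping.lookup \<gamma> i"
  define b where "b = Poly_Mapping.lookup \<gamma> (Suc i)"
  define K where "K = (if b \<le> a then {b..a} else {Suc a..b - 1})"
  have "\<delta> \<in> Poly_Mapping.keys (\<Sum>k\<in>K. monom (set_pair i \<gamma> k (a + b - k)))"
    using assms by (cases "b \<le> a") (simp_all add: demazure_monom_def a_def b_def K_def Let_def)
  then obtain k where "k \<in> K" "\<delta> = set_pair i \<gamma> k (a + b - k)"
    using keys_sum by (force simp: monom_def)
  moreover have "min a b \<le> k \<and> k \<le> max a b" using \<open>k \<in> K\<close> by (auto simp: K_def split: if_splits)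
  ultimately show ?thesis using that by (auto simp: a_def b_def)
qed

lemma keys_demazure:
  "Poly_Mapping.keys (demazure i g) \<subseteq> (\<Union>\<gamma>\<in>Poly_Mapping.keys g. Poly_Mapping.keys (demazure_monom i \<gamma>))"
proof -
  have "Poly_Mapping.keys (Poly_Mapping.single 0 c * p) \<subseteq> Poly_Mapping.keys p" for c and p :: mpoly
    using keys_mult[of "Poly_Mapping.single 0 c" p] by (auto split: if_splits)
  then show ?thesis unfolding demazure_def using keys_sum by fastforce
qed

lemma real_exp_set_pair_mem_convex:
  assumes "convex C" "real_exp \<gamma> \<in> C" "real_exp (swap_exp i \<gamma>) \<in> C"
    and "min (Poly_Mapping.lookup \<gamma> i) (Poly_Mapping.lookup \<gamma> (Suc i)) \<le> k"
      "k \<le> max (Poly_Mapping.lookup \<gamma> i) (Poly_Mapping.lookup \<gamma> (Suc i))"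
  shows "real_exp (set_pair i \<gamma> k (Poly_Mapping.lookup \<gamma> i + Poly_Mapping.lookup \<gamma> (Suc i) - k)) \<in> C"
proof -
  define a where "a = Poly_Mapping.lookup \<gamma> i"
  define b where "b = Poly_Mapping.lookup \<gamma> (Suc i)"
  show ?thesis
  proof (cases "a = b")
    case True
    then have "k = a" using assms(4,5) by (simp add: a_def b_def)
    then show ?thesis using True assms(2) set_pair_self[of i \<gamma>] by (simp add: a_def b_def)
  next
    case False
    define l where "l = (real a - real k) / (real a - real b)"
    have l: "0 \<le> l" "l \<le> 1"
      using assms(4,5) False unfolding l_def a_def [symmetric] b_def [symmetric]
      by (auto simp: divide_simps min_def max_def split: if_splits)
    have l_mult: "l * (real a - real b) = real a - real k" using False by (simp add: l_def)
    have "k \<le> a + b" using assms(4,5) by (auto simp: a_def b_def)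
    have coord_i: "(1 - l) * real a + l * real b = real k"
      using l_mult by (simp add: algebra_simps)
    have coord_Suc_i: "(1 - l) * real b + l * real a = real (a + b - k)"
      using l_mult \<open>k \<le> a + b\<close> by (simp add: algebra_simps of_nat_diff)
    have "real_exp (set_pair i \<gamma> k (a + b - k)) = (1 - l) *\<^sub>R real_exp \<gamma> + l *\<^sub>R real_exp (swap_exp i \<gamma>)"
    proof (rule poly_mapping_eqI)
      fix j
      consider "j = i" | "j = Suc i" | "j \<noteq> i" "j \<noteq> Suc i" by blast
      then show "Poly_Mapping.lookup (real_exp (set_pair i \<gamma> k (a + b - k))) j =
          Poly_Mapping.lookup ((1 - l) *\<^sub>R real_exp \<gamma> + l *\<^sub>R real_exp (swap_exp i \<gamma>)) j"
        by cases (simp_all add: lookup_real_exp lookup_set_pair lookup_add lookup_scaleR_poly_mapping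
            lookup_swap_exp swp_def a_def [symmetric] b_def [symmetric] coord_i coord_Suc_i,
            simp add: algebra_simps)
    qed
    then show ?thesis using convexD[OF assms(1-3), of "1 - l" l] l by (simp add: a_def b_def)
  qed
qed

lemma real_exp_keys_demazure_mem_convex:
  assumes "convex C"
    and "\<And>\<gamma>. \<gamma> \<in> Poly_Mapping.keys g \<Longrightarrow> real_exp \<gamma> \<in> C \<and> real_exp (swap_exp i \<gamma>) \<in> C"
    and "\<delta> \<in> Poly_Mapping.keys (demazure i g)"
  shows "real_exp \<delta> \<in> C"
proof -
  obtain \<gamma> where \<gamma>: "\<gamma> \<in> Poly_Mapping.keys g" "\<delta> \<in> Poly_Mapping.keys (demazure_monom i \<gamma>)"
    using assms(3) keys_demazure by blast
  from \<gamma>(2) show ?thesis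
    by (rule keys_demazure_monom) (use real_exp_set_pair_mem_convex assms(1) assms(2)[OF \<gamma>(1)] in auto)
qed

lemma lookup_single_zero_mult:
  "Poly_Mapping.lookup (Poly_Mapping.single 0 c * (p :: mpoly)) \<delta> = c * Poly_Mapping.lookup p \<delta>"
  by (simp add: lookup_map_poly_mapping when_def flip: mult_map_scale_conv_mult)

lemma lookup_demazure:
  "Poly_Mapping.lookup (demazure i g) \<delta> =
    (\<Sum>\<gamma>\<in>Poly_Mapping.keys g. Poly_Mapping.lookup g \<gamma> * Poly_Mapping.lookup (demazure_monom i \<gamma>) \<delta>)"
  by (simp add: demazure_def lookup_sum lookup_single_zero_mult)

lemma set_pair_eq_iff:
  assumes "k \<le> s"
  shows "set_pair i \<gamma> k (s - k) = \<delta> \<longleftrightarrow> Poly_Mapping.lookup \<delta> i = k \<and>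
     Poly_Mapping.lookup \<delta> i + Poly_Mapping.lookup \<delta> (Suc i) = s \<and>
     (\<forall>j. j \<noteq> i \<and> j \<noteq> Suc i \<longrightarrow> Poly_Mapping.lookup \<delta> j = Poly_Mapping.lookup \<gamma> j)"
proof
  assume "set_pair i \<gamma> k (s - k) = \<delta>"
  then have "Poly_Mapping.lookup \<delta> j =
      (if j = i then k else if j = Suc i then s - k else Poly_Mapping.lookup \<gamma> j)" for j
    by (auto simp: lookup_set_pair)
  then show "Poly_Mapping.lookup \<delta> i = k \<and> Poly_Mapping.lookup \<delta> i + Poly_Mapping.lookup \<delta> (Suc i) = s \<and>
      (\<forall>j. j \<noteq> i \<and> j \<noteq> Suc i \<longrightarrow> Poly_Mapping.lookup \<delta> j = Poly_Mapping.lookup \<gamma> j)"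
    using assms by simp
qed (rule poly_mapping_eqI, auto simp: lookup_set_pair)

lemma lookup_sum_monom_set_pair:
  assumes "finite K" "\<forall>k\<in>K. k \<le> s"
  shows "Poly_Mapping.lookup (\<Sum>k\<in>K. monom (set_pair i \<gamma> k (s - k))) \<delta> =
    (if Poly_Mapping.lookup \<delta> i \<in> K \<and> Poly_Mapping.lookup \<delta> i + Poly_Mapping.lookup \<delta> (Suc i) = s \<and>
        (\<forall>j. j \<noteq> i \<and> j \<noteq> Suc i \<longrightarrow> Poly_Mapping.lookup \<delta> j = Poly_Mapping.lookup \<gamma> j) then 1 else 0)"
proof -
  define C where "C \<longleftrightarrow> Poly_Mapping.lookup \<delta> i + Poly_Mapping.lookup \<delta> (Suc i) = s \<and>
    (\<forall>j. j \<noteq> i \<and> j \<noteq> Suc i \<longrightarrow> Poly_Mapping.lookup \<delta> j = Poly_Mapping.lookup \<gamma> j)"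
  have "Poly_Mapping.lookup (\<Sum>k\<in>K. monom (set_pair i \<gamma> k (s - k))) \<delta> =
      (\<Sum>k\<in>K. if k = Poly_Mapping.lookup \<delta> i then (if C then 1 else 0) else 0)"
    unfolding lookup_sum
  proof (rule sum.cong [OF refl])
    fix k assume "k \<in> K"
    then have "set_pair i \<gamma> k (s - k) = \<delta> \<longleftrightarrow> k = Poly_Mapping.lookup \<delta> i \<and> C"
      using assms(2) set_pair_eq_iff[of k s i \<gamma> \<delta>] by (auto simp: C_def)
    then show "Poly_Mapping.lookup (monom (set_pair i \<gamma> k (s - k))) \<delta> =
        (if k = Poly_Mapping.lookup \<delta> i then (if C then 1 else 0) else 0)"
      unfolding monom_def lookup_single when_def by simp
  qed
  also have "\<dots> = (if Poly_Mapping.lookup \<delta> i \<in> K \<and> C then 1 else 0)"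
    using assms(1) by (simp add: sum.delta)
  finally show ?thesis by (simp add: C_def)
qed

lemma lookup_demazure_monom:
  "Poly_Mapping.lookup (demazure_monom i \<gamma>) \<delta> =
    (let a = Poly_Mapping.lookup \<gamma> i; b = Poly_Mapping.lookup \<gamma> (Suc i);
       d = Poly_Mapping.lookup \<delta> i; d' = Poly_Mapping.lookup \<delta> (Suc i);
       same = (d + d' = a + b \<and>
         (\<forall>j. j \<noteq> i \<and> j \<noteq> Suc i \<longrightarrow> Poly_Mapping.lookup \<delta> j = Poly_Mapping.lookup \<gamma> j))
     in if b \<le> a then (if same \<and> b \<le> d \<and> d \<le> a then 1 else 0)
        else (if same \<and> a < d \<and> d < b then - 1 else 0))"
proof -
  define a where "a = Poly_Mapping.lookup \<gamma> i"
  define b where "b = Poly_Mapping.lookup \<gamma> (Suc i)"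
  have "Poly_Mapping.lookup (\<Sum>k\<in>{b..a}. monom (set_pair i \<gamma> k (a + b - k))) \<delta> =
    (if Poly_Mapping.lookup \<delta> i \<in> {b..a} \<and> Poly_Mapping.lookup \<delta> i + Poly_Mapping.lookup \<delta> (Suc i) = a + b \<and>
        (\<forall>j. j \<noteq> i \<and> j \<noteq> Suc i \<longrightarrow> Poly_Mapping.lookup \<delta> j = Poly_Mapping.lookup \<gamma> j) then 1 else 0)"
    "Poly_Mapping.lookup (\<Sum>k\<in>{Suc a..b - 1}. monom (set_pair i \<gamma> k (a + b - k))) \<delta> =
    (if Poly_Mapping.lookup \<delta> i \<in> {Suc a..b - 1} \<and> Poly_Mapping.lookup \<delta> i + Poly_Mapping.lookup \<delta> (Suc i) = a + b \<and>
        (\<forall>j. j \<noteq> i \<and> j \<noteq> Suc i \<longrightarrow> Poly_Mapping.lookup \<delta> j = Poly_Mapping.lookup \<gamma> j) then 1 else 0)"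
    by (rule lookup_sum_monom_set_pair; auto)+
  then show ?thesis
    by (cases "b \<le> a") (auto simp: demazure_monom_def Let_def a_def [symmetric] b_def [symmetric])
qed

lemma eq_iff_lookup_pair:
  "\<gamma> = \<delta> \<longleftrightarrow> (\<forall>j. j \<noteq> i \<and> j \<noteq> Suc i \<longrightarrow> Poly_Mapping.lookup \<delta> j = Poly_Mapping.lookup \<gamma> j) \<and>
     Poly_Mapping.lookup \<gamma> i = Poly_Mapping.lookup \<delta> i \<and>
     Poly_Mapping.lookup \<gamma> (Suc i) = Poly_Mapping.lookup \<delta> (Suc i)"
  by (auto simp: poly_mapping_eq_iff fun_eq_iff)

lemma eq_swap_exp_iff_lookup_pair:
  "\<gamma> = swap_exp i \<delta> \<longleftrightarrow> (\<forall>j. j \<noteq> i \<and> j \<noteq> Suc i \<longrightarrow> Poly_Mapping.lookup \<delta> j = Poly_Mapping.lookup \<gamma> j) \<and>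
     Poly_Mapping.lookup \<gamma> i = Poly_Mapping.lookup \<delta> (Suc i) \<and>
     Poly_Mapping.lookup \<gamma> (Suc i) = Poly_Mapping.lookup \<delta> i"
  unfolding eq_iff_lookup_pair[of \<gamma> "swap_exp i \<delta>" i] by (auto simp: lookup_swap_exp swp_def)

lemma demazure_coeff_two_valued_arith:
  fixes a b d d' t :: nat
  assumes "a \<le> t" "b \<le> t" "d = 0 \<or> d = t" "d' = 0 \<or> d' = t"
  shows "(if b \<le> a then (if (d + d' = a + b \<and> P) \<and> b \<le> d \<and> d \<le> a then (1::int) else 0)
          else (if (d + d' = a + b \<and> P) \<and> a < d \<and> d < b then - 1 else 0)) =
         (if (if d' \<le> d then P \<and> a = d \<and> b = d' else P \<and> a = d' \<and> b = d) then 1 else 0)"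
proof -
  have "(b \<le> a \<longrightarrow> ((d + d' = a + b \<and> b \<le> d \<and> d \<le> a) \<longleftrightarrow> (if d' \<le> d then a = d \<and> b = d' else a = d' \<and> b = d)))
     \<and> (\<not> b \<le> a \<longrightarrow> \<not> (d + d' = a + b \<and> a < d \<and> d < b) \<and> \<not> (if d' \<le> d then a = d \<and> b = d' else a = d' \<and> b = d))"
    using assms(3,4) by (elim disjE) (use assms(1,2) in arith)+
  then show ?thesis by (cases "b \<le> a"; cases "d' \<le> d") auto
qed

text \<open>Inside the cube \<open>[0, t]\<^sup>n\<close> the segment from \<open>\<gamma>\<close> to \<open>s\<^sub>i \<gamma>\<close> can contain a vertex \<open>\<delta>\<close>
  only as an endpoint, so \<open>x\<^sup>\<delta>\<close> occurs in \<open>\<pi>\<^sub>i x\<^sup>\<gamma>\<close> (with coefficient \<open>1\<close>) exactly when \<open>\<gamma>\<close> is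
  whichever of \<open>\<delta>\<close>, \<open>s\<^sub>i \<delta>\<close> has no ascent at \<open>i\<close>.\<close>

lemma lookup_demazure_monom_two_valued:
  assumes "Poly_Mapping.lookup \<gamma> i \<le> t" "Poly_Mapping.lookup \<gamma> (Suc i) \<le> t"
    and "Poly_Mapping.lookup \<delta> i = 0 \<or> Poly_Mapping.lookup \<delta> i = t"
    and "Poly_Mapping.lookup \<delta> (Suc i) = 0 \<or> Poly_Mapping.lookup \<delta> (Suc i) = t"
  shows "Poly_Mapping.lookup (demazure_monom i \<gamma>) \<delta> =
    (if \<gamma> = (if Poly_Mapping.lookup \<delta> (Suc i) \<le> Poly_Mapping.lookup \<delta> i then \<delta> else swap_exp i \<delta>)
     then 1 else 0)"
proof -
  have "(\<gamma> = (if Poly_Mapping.lookup \<delta> (Suc i) \<le> Poly_Mapping.lookup \<delta> i then \<delta> else swap_exp i \<delta>)) =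
      (if Poly_Mapping.lookup \<delta> (Suc i) \<le> Poly_Mapping.lookup \<delta> i then \<gamma> = \<delta> else \<gamma> = swap_exp i \<delta>)"
    by simp
  then show ?thesis
    unfolding lookup_demazure_monom Let_def eq_iff_lookup_pair[of \<gamma> \<delta> i] eq_swap_exp_iff_lookup_pair[of \<gamma> i \<delta>]
    using demazure_coeff_two_valued_arith[OF assms] by presburger
qed

lemma lookup_demazure_two_valued:
  assumes "\<And>\<gamma>. \<gamma> \<in> Poly_Mapping.keys g \<Longrightarrow> Poly_Mapping.lookup \<gamma> i \<le> t \<and> Poly_Mapping.lookup \<gamma> (Suc i) \<le> t"
    and "Poly_Mapping.lookup \<delta> i = 0 \<or> Poly_Mapping.lookup \<delta> i = t"
    and "Poly_Mapping.lookup \<delta> (Suc i) = 0 \<or> Poly_Mapping.lookup \<delta> (Suc i) = t"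
  shows "Poly_Mapping.lookup (demazure i g) \<delta> =
    Poly_Mapping.lookup g (if Poly_Mapping.lookup \<delta> (Suc i) \<le> Poly_Mapping.lookup \<delta> i then \<delta> else swap_exp i \<delta>)"
    (is "_ = Poly_Mapping.lookup g ?target")
proof -
  have "Poly_Mapping.lookup (demazure i g) \<delta> =
      (\<Sum>\<gamma>\<in>Poly_Mapping.keys g. if \<gamma> = ?target then Poly_Mapping.lookup g \<gamma> else 0)"
    unfolding lookup_demazure
  proof (rule sum.cong [OF refl])
    fix \<gamma> assume "\<gamma> \<in> Poly_Mapping.keys g"
    then have "Poly_Mapping.lookup (demazure_monom i \<gamma>) \<delta> = (if \<gamma> = ?target then 1 else 0)"
      using assms(1) lookup_demazure_monom_two_valued[OF _ _ assms(2,3)] by blast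
    then show "Poly_Mapping.lookup g \<gamma> * Poly_Mapping.lookup (demazure_monom i \<gamma>) \<delta> =
        (if \<gamma> = ?target then Poly_Mapping.lookup g \<gamma> else 0)"
      by simp
  qed
  also have "\<dots> = Poly_Mapping.lookup g ?target"
    by (simp add: sum.delta' in_keys_iff)
  finally show ?thesis .
qed

section \<open>Exponents of \<open>\<kappa>\<^bsub>t\<alpha>\<^esub>\<close>\<close>

lemma downward_closed_eq_atLeastAtMost:
  assumes "finite S" "0 \<notin> S" "\<And>i. 1 \<le> i \<Longrightarrow> Suc i \<in> S \<Longrightarrow> i \<in> S"
  obtains m where "S = {1..m}"
proof (cases "S = {}")
  case True
  then show ?thesis using that[of 0] by simp
next
  case False
  define M where "M = Max S"
  have "M \<in> S" using False assms(1) by (simp add: M_def)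
  have "M - d \<in> S" if "d < M" for d
    using that
  proof (induction d)
    case 0
    then show ?case using \<open>M \<in> S\<close> by simp
  next
    case (Suc d)
    then have "1 \<le> M - Suc d" "Suc (M - Suc d) \<in> S" by (simp_all add: Suc_diff_Suc)
    then show ?case by (rule assms(3))
  qed
  then have "{1..M} \<subseteq> S"
    by (metis atLeastAtMost_iff diff_diff_cancel diff_less less_le_trans subsetI zero_less_one)
  moreover have "S \<subseteq> {1..M}"
  proof
    fix x assume "x \<in> S"
    then have "x \<noteq> 0" using assms(2) by metis
    moreover have "x \<le> M" using Max_ge[OF assms(1) \<open>x \<in> S\<close>] by (simp add: M_def)
    ultimately show "x \<in> {1..M}" by simp
  qed
  ultimately show ?thesis using that by blast
qed
lemma schubert_bases_of_dominant_scaled_indicator: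
  assumes "S \<subseteq> {1..n}" "0 < t"
    and "\<forall>i. 1 \<le> i \<and> i < n \<longrightarrow>
      Poly_Mapping.lookup (scaled_indicator t S) (Suc i) \<le> Poly_Mapping.lookup (scaled_indicator t S) i"
    and "T \<in> schubert_bases n S"
  shows "T = S"
proof -
  have "finite S" using assms(1) finite_subset by blast
  have "i \<in> S" if "1 \<le> i" "Suc i \<in> S" for i
  proof -
    have "i < n" using that assms(1) by auto
    then have "Poly_Mapping.lookup (scaled_indicator t S) (Suc i) \<le> Poly_Mapping.lookup (scaled_indicator t S) i"
      using assms(3) that(1) by blast
    then show ?thesis using that(2) assms(2) \<open>finite S\<close> by (simp add: lookup_scaled_indicator split: if_splits)
  qed
  moreover have "0 \<notin> S" using assms(1) by auto
  ultimately obtain m where m: "S = {1..m}"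
    using downward_closed_eq_atLeastAtMost[OF \<open>finite S\<close>] by metis
  have "T \<subseteq> {1..n}" "gale_le T {1..m}" using assms(4) m by (simp_all add: schubert_bases_def)
  then show ?thesis using gale_le_initial_segment m by blast
qed

lemma real_exp_keys_is_key_scaled_indicator:
  assumes "is_key n \<beta> f" "\<beta> = scaled_indicator t S" "S \<subseteq> {1..n}" "\<gamma> \<in> Poly_Mapping.keys f"
  shows "real_exp \<gamma> \<in> dilated_schubert_polytope n t S"
  using assms
proof (induction arbitrary: S \<gamma> rule: is_key.induct)
  case (dominant \<alpha>)
  have "finite S" using dominant.prems(2) finite_subset by blast
  then have "S \<in> schubert_bases n S" using dominant.prems(2) by (simp add: schubert_bases_def gale_le_refl)
  moreover have "real_exp \<gamma> = real t *\<^sub>R e_vec S"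
    using dominant.prems \<open>finite S\<close> by (simp add: monom_def real_exp_scaled_indicator)
  ultimately show ?case unfolding dilated_schubert_polytope_def by (auto intro: hull_inc)
next
  case (step \<alpha> i g)
  have "finite S" using step.prems(2) finite_subset by blast
  note descent = ascent_scaled_indicator[OF \<open>finite S\<close> step.hyps(4)[unfolded step.prems(1)]]
  have S': "swap_exp i \<alpha> = scaled_indicator t (swp i ` S)" "swp i ` S \<subseteq> {1..n}"
    using step.prems(1) swp_image_subset[OF step.prems(2) step.hyps(2,3)] \<open>finite S\<close>
    by (simp_all add: swap_exp_scaled_indicator)
  have IH: "real_exp \<gamma>' \<in> dilated_schubert_polytope n t S" if "\<gamma>' \<in> Poly_Mapping.keys g" for \<gamma>'
  proof -
    have "real_exp \<gamma>' \<in> dilated_schubert_polytope n t (swp i ` S)"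
      using step.IH[OF S' that] .
    then show ?thesis using dilated_schubert_polytope_swp_image_subset[OF \<open>finite S\<close> descent] by blast
  qed
  show ?case
  proof (rule real_exp_keys_demazure_mem_convex)
    show "convex (dilated_schubert_polytope n t S)" by (simp add: dilated_schubert_polytope_def)
    show "\<gamma> \<in> Poly_Mapping.keys (demazure i g)" using step.prems(3) by (simp add: ddiff_var_mult)
    show "real_exp \<gamma>' \<in> dilated_schubert_polytope n t S \<and>
        real_exp (swap_exp i \<gamma>') \<in> dilated_schubert_polytope n t S" if "\<gamma>' \<in> Poly_Mapping.keys g" for \<gamma>'
      using IH[OF that] swap_point_dilated_schubert_polytope[OF \<open>finite S\<close> descent step.hyps(2,3) IH[OF that]]
      by (simp add: swap_point_real_exp)
  qed
qed

lemma lookup_is_key_scaled_indicator_basis: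
  assumes "is_key n \<beta> f" "\<beta> = scaled_indicator t S" "S \<subseteq> {1..n}" "0 < t" "T \<in> schubert_bases n S"
  shows "Poly_Mapping.lookup f (scaled_indicator t T) \<noteq> 0"
  using assms
proof (induction arbitrary: S T rule: is_key.induct)
  case (dominant \<alpha>)
  then have "T = S" using schubert_bases_of_dominant_scaled_indicator by blast
  then show ?case using dominant.prems(1) by (simp add: monom_def)
next
  case (step \<alpha> i g)
  have "finite S" using step.prems(2) finite_subset by blast
  have "finite T" using finite_schubert_basis[OF step.prems(4)] .
  note descent = ascent_scaled_indicator[OF \<open>finite S\<close> step.hyps(4)[unfolded step.prems(1)]]
  define T' where "T' = (if Suc i \<in> T \<and> i \<notin> T then swp i ` T else T)"
  have T': "T' \<in> schubert_bases n (swp i ` S)"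
    unfolding T'_def by (rule schubert_basis_swp_image[OF \<open>finite S\<close> descent step.hyps(2,3) step.prems(4)])
  have S': "swap_exp i \<alpha> = scaled_indicator t (swp i ` S)" "swp i ` S \<subseteq> {1..n}"
    using step.prems(1) swp_image_subset[OF step.prems(2) step.hyps(2,3)] \<open>finite S\<close>
    by (simp_all add: swap_exp_scaled_indicator)
  have bounded: "Poly_Mapping.lookup \<gamma> j \<le> t" if "\<gamma> \<in> Poly_Mapping.keys g" for \<gamma> j
    using lookup_le_of_mem_dilated_schubert_polytope[of "real_exp \<gamma>"]
      real_exp_keys_is_key_scaled_indicator[OF step.hyps(5) S' that]
    by (simp add: lookup_real_exp)
  have "Poly_Mapping.lookup (demazure i g) (scaled_indicator t T) =
      Poly_Mapping.lookup g (scaled_indicator t T')"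
    using lookup_demazure_two_valued[of g i t "scaled_indicator t T"] bounded \<open>finite T\<close> step.prems(3)
    by (auto simp: T'_def lookup_scaled_indicator swap_exp_scaled_indicator)
  then show ?case
    using step.IH[OF S' step.prems(3) T'] by (simp add: ddiff_var_mult)
qed

lemma is_key_key_poly_scaled_indicator:
  assumes "S \<subseteq> {1..n}"
  shows "is_key n (scaled_indicator t S) (key_poly n (scaled_indicator t S))"
proof -
  have "finite S" using assms finite_subset by blast
  have keys: "Poly_Mapping.keys (scaled_indicator t S) \<subseteq> {1..n}"
    using keys_scaled_indicator[OF \<open>finite S\<close>] assms by blast
  obtain f where f: "is_key n (scaled_indicator t S) f" using is_key_exists[OF keys] by blast
  have "key_poly n (scaled_indicator t S) = f"
    by (rule key_poly_eqI[where t = t, OF _ keys f]) (simp add: lookup_scaled_indicator \<open>finite S\<close>)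
  then show ?thesis using f by simp
qed

lemma newton_is_key_scaled_indicator:
  assumes "is_key n (scaled_indicator t S) f" "S \<subseteq> {1..n}" "0 < t"
  shows "newton f = dilated_schubert_polytope n t S"
proof
  show "newton f \<subseteq> dilated_schubert_polytope n t S"
    unfolding newton_def
  proof (rule hull_minimal)
    show "(\<lambda>\<beta>. Poly_Mapping.map real \<beta>) ` Poly_Mapping.keys f \<subseteq> dilated_schubert_polytope n t S"
      using real_exp_keys_is_key_scaled_indicator[OF assms(1) refl assms(2)] by (auto simp: real_exp_def)
  qed (simp add: dilated_schubert_polytope_def)
  show "dilated_schubert_polytope n t S \<subseteq> newton f"
    unfolding newton_def dilated_schubert_polytope_def
  proof (rule hull_mono, safe)
    fix T assume T: "T \<in> schubert_bases n S"
    then have "scaled_indicator t T \<in> Poly_Mapping.keys f"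
      using lookup_is_key_scaled_indicator_basis[OF assms(1) refl assms(2,3)] by (simp add: in_keys_iff)
    then show "real t *\<^sub>R e_vec T \<in> (\<lambda>\<beta>. Poly_Mapping.map real \<beta>) ` Poly_Mapping.keys f"
      using real_exp_scaled_indicator[OF finite_schubert_basis[OF T]] by (metis image_eqI real_exp_def)
  qed
qed

theorem lemma3p1:
  fixes n t :: nat and S :: "nat set"
  assumes "S \<subseteq> {1..n}" and "0 < t"
  shows "(\<lambda>x. real t *\<^sub>R x) ` matroid_polytope (schubert_bases n S)
       = newton (key_poly n (Poly_Mapping.map (\<lambda>k. t * k) (indicator_exp S)))"
proof -
  have "(\<lambda>x. real t *\<^sub>R x) ` matroid_polytope (schubert_bases n S) = dilated_schubert_polytope n t S"
    by (simp add: matroid_polytope_def dilated_schubert_polytope_def convex_hull_scaling [symmetric] image_image)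
  also have "\<dots> = newton (key_poly n (scaled_indicator t S))"
    using newton_is_key_scaled_indicator[OF is_key_key_poly_scaled_indicator[OF assms(1)] assms] ..
  finally show ?thesis by (simp add: scaled_indicator_def)
qed

end
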